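(* Assume $A$ contains at least one prime element and that $U(A)$ is finite. Then for every $x\in A\setminus(U(A)\cup\{0\})$ such that $\mathcal D(x)$ is finite, there exist a prime element $p$ of $A$, an integer $n\ge1$ and $a\in A\setminus\{0\}$ such that $x=ap^n$ and $\gcd(a,p)=1$ (i.e. $p\nmid a$).
   Context: Let $\mathbb F$ be a subfield of $\mathbb C$ with a norm (absolute value) $\|\cdot\|_{\mathbb F}$, and $A$ a subring of $\mathbb F$ containing $1$ (hence an integral domain). $U(A)$ is the unit group of $A$; $d\mid x$ means $x=dc$ for some $c\in A$; $\mathcal D(x)=\{d\in A:d\mid x\}$; $xU(A)=\{xu:u\in U(A)\}$. $N:A\to\mathbb F\cap\mathbb R$ is a map with $N(a)\neq0$ for all nonzero $a\in A$ and satisfying: for all $x\in A$, $N(x)\in A$, $\mathcal D(N(x))=\mathcal D(x)$ and $N(N(x))=N(x)$; for all $x,y\in A$ there is $z\in A$ with $N(x)+N(y)=N(z)$; $N(-x)=N(x)$; $N(xy)=N(x)N(y)$; $\|N(x)\|_{\mathbb F}=N(x)$; for every $x\ne0$ there is $x'\in\mathbb F\cap\mathbb R$ with $N(x)^2=xx'\in A$. An element $p\in A$ is irreducible if $p\notin U(A)\cup\{0\}$ and $\mathcal D(p)=U(A)\cup pU(A)$; it is prime if it is irreducible and $N(p)=p$. For a prime $p$ and $a\in A$, $\gcd(a,p)=1$ means $p\nmid a$. *)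

theory Defs
  imports Complex_Main
begin

definition subfield_of_C :: "complex set \<Rightarrow> bool" where
  "subfield_of_C F \<longleftrightarrow> 0 \<in> F \<and> 1 \<in> F \<and>
     (\<forall>x\<in>F. \<forall>y\<in>F. x + y \<in> F \<and> x * y \<in> F) \<and>
     (\<forall>x\<in>F. - x \<in> F) \<and> (\<forall>x\<in>F. x \<noteq> 0 \<longrightarrow> inverse x \<in> F)"

definition abs_value_on :: "complex set \<Rightarrow> (complex \<Rightarrow> real) \<Rightarrow> bool" where
  "abs_value_on F nrm \<longleftrightarrow>
     (\<forall>x\<in>F. nrm x \<ge> 0 \<and> (nrm x = 0 \<longleftrightarrow> x = 0)) \<and>
     (\<forall>x\<in>F. \<forall>y\<in>F. nrm (x * y) = nrm x * nrm y \<and> nrm (x + y) \<le> nrm x + nrm y)"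

definition subring_of :: "complex set \<Rightarrow> complex set \<Rightarrow> bool" where
  "subring_of A F \<longleftrightarrow> A \<subseteq> F \<and> 0 \<in> A \<and> 1 \<in> A \<and>
     (\<forall>x\<in>A. \<forall>y\<in>A. x + y \<in> A \<and> x * y \<in> A) \<and> (\<forall>x\<in>A. - x \<in> A)"

definition units_of_ring :: "complex set \<Rightarrow> complex set" where
  "units_of_ring A = {u \<in> A. \<exists>v\<in>A. u * v = 1}"

definition rdvd :: "complex set \<Rightarrow> complex \<Rightarrow> complex \<Rightarrow> bool" where
  "rdvd A d x \<longleftrightarrow> (\<exists>c\<in>A. x = d * c)"

definition divisors :: "complex set \<Rightarrow> complex \<Rightarrow> complex set" where
  "divisors A x = {d \<in> A. rdvd A d x}"

definition good_N :: "complex set \<Rightarrow> complex set \<Rightarrow> (complex \<Rightarrow> real) \<Rightarrow> (complex \<Rightarrow> complex) \<Rightarrow> bool" where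
  "good_N F A nrm N \<longleftrightarrow>
     (\<forall>x\<in>A. N x \<in> F \<and> N x \<in> \<real>) \<and>
     (\<forall>a\<in>A. a \<noteq> 0 \<longrightarrow> N a \<noteq> 0) \<and>
     (\<forall>x\<in>A. N x \<in> A \<and> divisors A (N x) = divisors A x \<and> N (N x) = N x) \<and>
     (\<forall>x\<in>A. \<forall>y\<in>A. \<exists>z\<in>A. N x + N y = N z) \<and>
     (\<forall>x\<in>A. N (- x) = N x) \<and>
     (\<forall>x\<in>A. \<forall>y\<in>A. N (x * y) = N x * N y) \<and>
     (\<forall>x\<in>A. complex_of_real (nrm (N x)) = N x) \<and>
     (\<forall>x\<in>A. x \<noteq> 0 \<longrightarrow> (\<exists>x'. x' \<in> F \<and> x' \<in> \<real> \<and> (N x)\<^sup>2 = x * x' \<and> x * x' \<in> A))"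

definition irreducible_el :: "complex set \<Rightarrow> complex \<Rightarrow> bool" where
  "irreducible_el A p \<longleftrightarrow> p \<in> A \<and> p \<notin> units_of_ring A \<and> p \<noteq> 0 \<and>
     divisors A p = units_of_ring A \<union> {p * u | u. u \<in> units_of_ring A}"

definition prime_el :: "complex set \<Rightarrow> (complex \<Rightarrow> complex) \<Rightarrow> complex \<Rightarrow> bool" where
  "prime_el A N p \<longleftrightarrow> irreducible_el A p \<and> N p = p"

end

theory Submission
  imports Defs
begin

text \<open>
  A non-unit x with finitely many divisors has an irreducible divisor: take a non-unit divisor
  whose divisor set is smallest. Replacing it by its N-value, which has the same divisors, gives
  a prime p dividing x. The powers of p are pairwise distinct, so only finitely many of them
  divide x.
\<close>

lemma subring_of_closed:
  assumes "subring_of A F"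
  shows "1 \<in> A" and "\<And>x y. x \<in> A \<Longrightarrow> y \<in> A \<Longrightarrow> x * y \<in> A"
  using assms unfolding subring_of_def by auto

lemma subring_of_power_closed:
  assumes "subring_of A F" and "p \<in> A"
  shows "p ^ n \<in> A"
  using subring_of_closed[OF assms(1)] assms(2) by (induction n) auto

lemma rdvd_refl:
  assumes "subring_of A F"
  shows "rdvd A x x"
  using subring_of_closed(1)[OF assms] unfolding rdvd_def by (metis mult_1_right)

lemma rdvd_trans:
  assumes "subring_of A F" and "rdvd A a b" and "rdvd A b c"
  shows "rdvd A a c"
  using assms subring_of_closed[OF assms(1)] unfolding rdvd_def by (metis mult.assoc)

lemma rdvd_zeroD:
  assumes "rdvd A 0 x"
  shows "x = 0"
  using assms unfolding rdvd_def by auto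

lemma units_of_ring_mult:
  assumes "subring_of A F" and "u \<in> units_of_ring A" and "v \<in> units_of_ring A"
  shows "u * v \<in> units_of_ring A"
proof -
  obtain u' v' where "u' \<in> A" "u * u' = 1" "v' \<in> A" "v * v' = 1"
    using assms(2,3) unfolding units_of_ring_def by auto
  have "(u * v) * (v' * u') = u * (v * v') * u'" by (simp only: mult.assoc)
  also have "\<dots> = 1" using \<open>u * u' = 1\<close> \<open>v * v' = 1\<close> by simp
  finally have "(u * v) * (v' * u') = 1" .
  then show ?thesis
    using assms \<open>u' \<in> A\<close> \<open>v' \<in> A\<close> subring_of_closed(2)[OF assms(1)]
    unfolding units_of_ring_def by blast
qed

lemma unit_rdvd:
  assumes "subring_of A F" and "u \<in> units_of_ring A" and "x \<in> A"
  shows "rdvd A u x"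
proof -
  obtain v where "v \<in> A" "u * v = 1" using assms(2) unfolding units_of_ring_def by auto
  then have "x = u * (v * x)" by (simp add: mult.assoc[symmetric])
  then show ?thesis
    using subring_of_closed(2)[OF assms(1) \<open>v \<in> A\<close> assms(3)] unfolding rdvd_def by blast
qed

lemma rdvd_unit_imp_unit:
  assumes "subring_of A F" and "d \<in> A" and "rdvd A d u" and "u \<in> units_of_ring A"
  shows "d \<in> units_of_ring A"
proof -
  obtain c v where "c \<in> A" "u = d * c" "v \<in> A" "u * v = 1"
    using assms(3,4) unfolding rdvd_def units_of_ring_def by auto
  then have "d * (c * v) = 1" by (simp add: mult.assoc)
  then show ?thesis
    using assms(2) subring_of_closed(2)[OF assms(1) \<open>c \<in> A\<close> \<open>v \<in> A\<close>]
    unfolding units_of_ring_def by blast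
qed

lemma rdvd_antisym_associated:
  assumes "subring_of A F" and "q \<noteq> 0" and "rdvd A p q" and "rdvd A q p"
  shows "\<exists>u\<in>units_of_ring A. p = q * u"
proof -
  obtain c c' where "c \<in> A" "q = p * c" "c' \<in> A" "p = q * c'"
    using assms(3,4) unfolding rdvd_def by blast
  then have "q * (c' * c) = q * 1" by (metis mult.assoc mult_1_right)
  then have "c' * c = 1" using assms(2) by simp
  then show ?thesis
    using \<open>c \<in> A\<close> \<open>c' \<in> A\<close> \<open>p = q * c'\<close> unfolding units_of_ring_def by blast
qed

lemma divisors_mono:
  assumes "subring_of A F" and "rdvd A d x"
  shows "divisors A d \<subseteq> divisors A x"
  using rdvd_trans[OF assms(1) _ assms(2)] unfolding divisors_def by auto

lemma irreducible_elI:
  assumes sr: "subring_of A F" and "q \<in> A" and "q \<notin> units_of_ring A" and "q \<noteq> 0"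
    and assoc: "\<And>e. e \<in> A \<Longrightarrow> rdvd A e q \<Longrightarrow> e \<notin> units_of_ring A \<Longrightarrow>
                  \<exists>u\<in>units_of_ring A. e = q * u"
  shows "irreducible_el A q"
proof -
  have "units_of_ring A \<subseteq> divisors A q"
    using unit_rdvd[OF sr _ \<open>q \<in> A\<close>] unfolding divisors_def units_of_ring_def by blast
  moreover have "{q * u | u. u \<in> units_of_ring A} \<subseteq> divisors A q"
  proof safe
    fix u assume "u \<in> units_of_ring A"
    then obtain v where "u \<in> A" "v \<in> A" "u * v = 1" unfolding units_of_ring_def by auto
    then have "q = (q * u) * v" by (simp add: mult.assoc)
    then show "q * u \<in> divisors A q"
      using \<open>u \<in> A\<close> \<open>v \<in> A\<close> \<open>q \<in> A\<close> subring_of_closed(2)[OF sr]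
      unfolding divisors_def rdvd_def by blast
  qed
  moreover have "divisors A q \<subseteq> units_of_ring A \<union> {q * u | u. u \<in> units_of_ring A}"
    using assoc unfolding divisors_def by blast
  ultimately show ?thesis using assms(2-4) unfolding irreducible_el_def by blast
qed

lemma irreducible_elD:
  assumes "irreducible_el A q" and "e \<in> A" and "rdvd A e q" and "e \<notin> units_of_ring A"
  shows "\<exists>u\<in>units_of_ring A. e = q * u"
  using assms unfolding irreducible_el_def divisors_def by blast

lemma irreducible_el_divisors_eq:
  assumes sr: "subring_of A F" and q: "irreducible_el A q"
    and "p \<in> A" and same: "divisors A p = divisors A q"
  shows "irreducible_el A p"
proof -
  have "q \<in> A" "q \<notin> units_of_ring A" "q \<noteq> 0"
    using q unfolding irreducible_el_def by auto
  have "rdvd A p q" and "rdvd A q p"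
    using same rdvd_refl[OF sr] \<open>p \<in> A\<close> \<open>q \<in> A\<close> unfolding divisors_def by blast+
  then obtain v where v: "v \<in> units_of_ring A" "q = p * v"
    using rdvd_antisym_associated[OF sr] rdvd_zeroD \<open>q \<noteq> 0\<close> by metis
  show ?thesis
  proof (rule irreducible_elI[OF sr \<open>p \<in> A\<close>])
    show "p \<notin> units_of_ring A"
      using rdvd_unit_imp_unit[OF sr \<open>q \<in> A\<close> \<open>rdvd A q p\<close>] \<open>q \<notin> units_of_ring A\<close> by blast
    show "p \<noteq> 0" using \<open>q \<noteq> 0\<close> v(2) by simp
  next
    fix e assume "e \<in> A" "rdvd A e p" "e \<notin> units_of_ring A"
    then obtain w where "w \<in> units_of_ring A" "e = q * w"
      using irreducible_elD[OF q] rdvd_trans[OF sr _ \<open>rdvd A p q\<close>] by blast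
    then show "\<exists>u\<in>units_of_ring A. e = p * u"
      using units_of_ring_mult[OF sr v(1)] v(2) by (metis mult.assoc)
  qed
qed

lemma finite_divisors_imp_irreducible_factor:
  assumes sr: "subring_of A F" and "x \<in> A" "x \<notin> units_of_ring A" "x \<noteq> 0"
    and fin: "finite (divisors A x)"
  shows "\<exists>q. irreducible_el A q \<and> rdvd A q x"
proof -
  define P where "P d \<longleftrightarrow> d \<in> A \<and> rdvd A d x \<and> d \<notin> units_of_ring A" for d
  have "P x" unfolding P_def using assms rdvd_refl[OF sr] by blast
  then obtain q where "P q"
    and least: "\<And>d. P d \<Longrightarrow> card (divisors A q) \<le> card (divisors A d)"
    using ex_has_least_nat[of P x "\<lambda>d. card (divisors A d)"] by blast
  then have "q \<in> A" "rdvd A q x" "q \<notin> units_of_ring A" unfolding P_def by auto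
  have "q \<noteq> 0" using \<open>rdvd A q x\<close> \<open>x \<noteq> 0\<close> rdvd_zeroD by blast
  have "irreducible_el A q"
  proof (rule irreducible_elI[OF sr \<open>q \<in> A\<close> \<open>q \<notin> units_of_ring A\<close> \<open>q \<noteq> 0\<close>])
    fix e assume "e \<in> A" "rdvd A e q" "e \<notin> units_of_ring A"
    then have "P e" unfolding P_def using rdvd_trans[OF sr _ \<open>rdvd A q x\<close>] by blast
    have sub: "divisors A e \<subseteq> divisors A q" using divisors_mono[OF sr \<open>rdvd A e q\<close>] .
    have "finite (divisors A q)"
      using finite_subset[OF divisors_mono[OF sr \<open>rdvd A q x\<close>] fin] .
    with sub least[OF \<open>P e\<close>] have "divisors A e = divisors A q"
      by (meson card_seteq)
    then have "rdvd A q e"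
      using rdvd_refl[OF sr] \<open>q \<in> A\<close> unfolding divisors_def by blast
    then show "\<exists>u\<in>units_of_ring A. e = q * u"
      using rdvd_antisym_associated[OF sr \<open>q \<noteq> 0\<close> \<open>rdvd A e q\<close>] by blast
  qed
  then show ?thesis using \<open>rdvd A q x\<close> by blast
qed

lemma finite_divisors_imp_prime_factor:
  assumes sr: "subring_of A F" and N: "good_N F A nrm N"
    and "x \<in> A" "x \<notin> units_of_ring A" "x \<noteq> 0" "finite (divisors A x)"
  shows "\<exists>p. prime_el A N p \<and> rdvd A p x"
proof -
  obtain q where q: "irreducible_el A q" and "rdvd A q x"
    using finite_divisors_imp_irreducible_factor[OF sr assms(3-6)] by blast
  have "q \<in> A" using q unfolding irreducible_el_def by simp
  then have "N q \<in> A" "divisors A (N q) = divisors A q" "N (N q) = N q"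
    using N unfolding good_N_def by auto
  then have "prime_el A N (N q)"
    using irreducible_el_divisors_eq[OF sr q] unfolding prime_el_def by blast
  moreover have "rdvd A (N q) q"
    using \<open>divisors A (N q) = divisors A q\<close> rdvd_refl[OF sr] \<open>N q \<in> A\<close>
    unfolding divisors_def by blast
  ultimately show ?thesis using rdvd_trans[OF sr _ \<open>rdvd A q x\<close>] by blast
qed

lemma inj_power_nonunit:
  assumes sr: "subring_of A F" and "p \<in> A" "p \<notin> units_of_ring A" "p \<noteq> 0"
  shows "inj (\<lambda>n::nat. p ^ n)"
proof -
  have "p ^ n \<noteq> p ^ m" if "n < m" for n m :: nat
  proof
    assume "p ^ n = p ^ m"
    obtain k where "m = n + Suc k" using less_imp_Suc_add[OF \<open>n < m\<close>] by auto
    then have "p ^ n * (p * p ^ k) = p ^ n * 1" using \<open>p ^ n = p ^ m\<close> by (simp add: power_add)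
    then have "p * p ^ k = 1" using \<open>p \<noteq> 0\<close> by simp
    then show False
      using assms(2,3) subring_of_power_closed[OF sr] unfolding units_of_ring_def by blast
  qed
  then show ?thesis by (metis injI linorder_neqE)
qed

lemma finite_divisors_imp_maximal_power_factor:
  assumes sr: "subring_of A F" and p: "p \<in> A" "p \<notin> units_of_ring A" "p \<noteq> 0"
    and "x \<in> A" "x \<noteq> 0" "rdvd A p x" and fin: "finite (divisors A x)"
  shows "\<exists>n a. n \<ge> 1 \<and> a \<in> A \<and> a \<noteq> 0 \<and> x = a * p ^ n \<and> \<not> rdvd A p a"
proof -
  have "\<exists>n. \<not> rdvd A (p ^ n) x"
  proof (rule ccontr)
    assume "\<nexists>n. \<not> rdvd A (p ^ n) x"
    then have "range (\<lambda>n::nat. p ^ n) \<subseteq> divisors A x"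
      using subring_of_power_closed[OF sr p(1)] unfolding divisors_def by auto
    then show False
      using finite_subset[OF _ fin] finite_imageD[OF _ inj_power_nonunit[OF sr p]] by auto
  qed
  define m where "m = (LEAST n. \<not> rdvd A (p ^ n) x)"
  have not_dvd: "\<not> rdvd A (p ^ m) x"
    unfolding m_def using \<open>\<exists>n. \<not> rdvd A (p ^ n) x\<close> by (rule LeastI_ex)
  have "rdvd A 1 x" using \<open>x \<in> A\<close> unfolding rdvd_def by force
  then have "m \<noteq> 0" "m \<noteq> 1"
    using not_dvd \<open>rdvd A p x\<close> by (metis power_0, metis power_one_right)
  then obtain n where "m = Suc n" "n \<ge> 1" by (cases m) auto
  then have "rdvd A (p ^ n) x" unfolding m_def by (metis lessI not_less_Least)
  then obtain a where "a \<in> A" "x = p ^ n * a" unfolding rdvd_def by auto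
  moreover have "\<not> rdvd A p a"
  proof
    assume "rdvd A p a"
    then obtain b where "b \<in> A" "a = p * b" unfolding rdvd_def by auto
    then have "x = p ^ m * b" using \<open>x = p ^ n * a\<close> \<open>m = Suc n\<close> by (simp add: mult.assoc)
    then show False using not_dvd \<open>b \<in> A\<close> unfolding rdvd_def by blast
  qed
  ultimately show ?thesis using \<open>n \<ge> 1\<close> \<open>x \<noteq> 0\<close> by (auto simp: mult.commute)
qed

theorem corollary5p4:
  fixes F A :: "complex set" and nrm :: "complex \<Rightarrow> real" and N :: "complex \<Rightarrow> complex"
  assumes "subfield_of_C F" and "abs_value_on F nrm" and "subring_of A F"
    and "good_N F A nrm N"
    and "\<exists>p. prime_el A N p"
    and "finite (units_of_ring A)"
  shows "\<forall>x\<in>A. x \<notin> units_of_ring A \<and> x \<noteq> 0 \<and> finite (divisors A x) \<longrightarrow>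
           (\<exists>p n a. prime_el A N p \<and> n \<ge> (1::nat) \<and> a \<in> A \<and> a \<noteq> 0 \<and>
                    x = a * p ^ n \<and> \<not> rdvd A p a)"
proof (intro ballI impI, elim conjE)
  fix x assume x: "x \<in> A" "x \<notin> units_of_ring A" "x \<noteq> 0" "finite (divisors A x)"
  obtain p where p: "prime_el A N p" and "rdvd A p x"
    using finite_divisors_imp_prime_factor[OF assms(3,4) x] by blast
  then have "p \<in> A" "p \<notin> units_of_ring A" "p \<noteq> 0"
    unfolding prime_el_def irreducible_el_def by auto
  with finite_divisors_imp_maximal_power_factor[OF assms(3) this x(1,3) \<open>rdvd A p x\<close> x(4)] p
  show "\<exists>p n a. prime_el A N p \<and> n \<ge> 1 \<and> a \<in> A \<and> a \<noteq> 0 \<and> x = a * p ^ n \<and> \<not> rdvd A p a"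
    by blast
qed

end
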